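(* Let $(A,\triangleright,\triangleleft,\alpha)$ be a Hom-$L$-dendriform algebra. Define $x\cdot y=x\triangleright y+x\triangleleft y$ and $x\ast y=x\triangleright y-y\triangleleft x$ for $x,y\in A$. Then $(A,\cdot,\alpha)$ and $(A,\ast,\alpha)$ are both Hom-preLie algebras.
   Context: A Hom-$L$-dendriform algebra is a vector space $A$ with bilinear maps $\triangleleft,\triangleright:A\otimes A\to A$ and a linear map $\alpha:A\to A$ such that for all $x,y,z\in A$: $\alpha(x)\triangleright(y\triangleright z)=(x\triangleright y)\triangleright\alpha(z)+(x\triangleleft y)\triangleright\alpha(z)+\alpha(y)\triangleright(x\triangleright z)-(y\triangleleft x)\triangleright\alpha(z)-(y\triangleright x)\triangleright\alpha(z)$ and $\alpha(x)\triangleright(y\triangleleft z)=(x\triangleright y)\triangleleft\alpha(z)+\alpha(y)\triangleleft(x\triangleright z)+\alpha(y)\triangleleft(x\triangleleft z)-(y\triangleleft x)\triangleleft\alpha(z)$. A Hom-preLie algebra is a vector space $S$ with a bilinear product $\cdot$ and linear $\alpha$ such that $(x\cdot y)\cdot\alpha(z)-\alpha(x)\cdot(y\cdot z)=(y\cdot x)\cdot\alpha(z)-\alpha(y)\cdot(x\cdot z)$ for all $x,y,z$. *)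

theory Defs
  imports Main "HOL.Vector_Spaces"
begin

text \<open>Linear maps and bilinear products are
  taken with respect to scale (Vector_Spaces.linear includes the vector space axioms).\<close>

definition bilinear_map :: "('k::field \<Rightarrow> 'a::ab_group_add \<Rightarrow> 'a) \<Rightarrow> ('a \<Rightarrow> 'a \<Rightarrow> 'a) \<Rightarrow> bool" where
  "bilinear_map scale m \<longleftrightarrow>
     (\<forall>y. Vector_Spaces.linear scale scale (\<lambda>x. m x y)) \<and>
     (\<forall>x. Vector_Spaces.linear scale scale (\<lambda>y. m x y))"

definition hom_L_dendriform ::
  "('k::field \<Rightarrow> 'a::ab_group_add \<Rightarrow> 'a) \<Rightarrow> ('a \<Rightarrow> 'a \<Rightarrow> 'a) \<Rightarrow> ('a \<Rightarrow> 'a \<Rightarrow> 'a) \<Rightarrow> ('a \<Rightarrow> 'a) \<Rightarrow> bool" where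
  "hom_L_dendriform scale R L \<alpha> \<longleftrightarrow>
     vector_space scale \<and> bilinear_map scale R \<and> bilinear_map scale L \<and>
     Vector_Spaces.linear scale scale \<alpha> \<and>
     (\<forall>x y z. R (\<alpha> x) (R y z) =
        R (R x y) (\<alpha> z) + R (L x y) (\<alpha> z) + R (\<alpha> y) (R x z)
        - R (L y x) (\<alpha> z) - R (R y x) (\<alpha> z)) \<and>
     (\<forall>x y z. R (\<alpha> x) (L y z) =
        L (R x y) (\<alpha> z) + L (\<alpha> y) (R x z) + L (\<alpha> y) (L x z) - L (L y x) (\<alpha> z))"

definition hom_preLie ::
  "('k::field \<Rightarrow> 'a::ab_group_add \<Rightarrow> 'a) \<Rightarrow> ('a \<Rightarrow> 'a \<Rightarrow> 'a) \<Rightarrow> ('a \<Rightarrow> 'a) \<Rightarrow> bool" where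
  "hom_preLie scale m \<alpha> \<longleftrightarrow>
     vector_space scale \<and> bilinear_map scale m \<and> Vector_Spaces.linear scale scale \<alpha> \<and>
     (\<forall>x y z. m (m x y) (\<alpha> z) - m (\<alpha> x) (m y z) = m (m y x) (\<alpha> z) - m (\<alpha> y) (m x z))"

end

theory Submission
  imports Defs
begin

text \<open>For both products,
  expanding the associators by bilinearity leaves the term \<open>\<alpha> x \<triangleright> (y \<triangleright> z)\<close>, which the
  first axiom rewrites, and terms \<open>\<alpha> _ \<triangleright> (_ \<triangleleft> _)\<close>, which the second axiom rewrites;
  after that everything cancels.\<close>

lemma linear_imp_vector_space_pair:
  "Vector_Spaces.linear s1 s2 f \<Longrightarrow> vector_space_pair s1 s2"
  by (simp add: linear_iff vector_space_pair_def)

lemma bilinear_map_add_left: "bilinear_map s m \<Longrightarrow> m (a + b) c = m a c + m b c"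
  and bilinear_map_add_right: "bilinear_map s m \<Longrightarrow> m a (b + c) = m a b + m a c"
  and bilinear_map_diff_left: "bilinear_map s m \<Longrightarrow> m (a - b) c = m a c - m b c"
  and bilinear_map_diff_right: "bilinear_map s m \<Longrightarrow> m a (b - c) = m a b - m a c"
  unfolding bilinear_map_def linear_iff_module_hom
  by (metis module_hom.add, metis module_hom.add, metis module_hom.diff, metis module_hom.diff)

lemma bilinear_map_swap: "bilinear_map s m \<Longrightarrow> bilinear_map s (\<lambda>x y. m y x)"
  by (simp add: bilinear_map_def)

lemma bilinear_map_add:
  assumes "bilinear_map s m" and "bilinear_map s n"
  shows "bilinear_map s (\<lambda>x y. m x y + n x y)"
  using assms unfolding bilinear_map_def
  by (metis vector_space_pair.linear_compose_add linear_imp_vector_space_pair)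

lemma bilinear_map_diff:
  assumes "bilinear_map s m" and "bilinear_map s n"
  shows "bilinear_map s (\<lambda>x y. m x y - n x y)"
  using assms unfolding bilinear_map_def
  by (metis vector_space_pair.linear_compose_sub linear_imp_vector_space_pair)

definition hom_associator ::
  "('a::minus \<Rightarrow> 'a \<Rightarrow> 'a) \<Rightarrow> ('a \<Rightarrow> 'a) \<Rightarrow> 'a \<Rightarrow> 'a \<Rightarrow> 'a \<Rightarrow> 'a" where
  "hom_associator m \<alpha> x y z = m (m x y) (\<alpha> z) - m (\<alpha> x) (m y z)"

lemma hom_preLieI:
  assumes "vector_space s" and "bilinear_map s m" and "Vector_Spaces.linear s s \<alpha>"
    and "\<And>x y z. hom_associator m \<alpha> x y z = hom_associator m \<alpha> y x z"
  shows "hom_preLie s m \<alpha>"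
  using assms by (simp add: hom_preLie_def hom_associator_def)

lemma hom_L_dendriformD:
  assumes "hom_L_dendriform s R L \<alpha>"
  shows hom_L_dendriform_vector_space: "vector_space s"
    and hom_L_dendriform_linear: "Vector_Spaces.linear s s \<alpha>"
    and hom_L_dendriform_bilinear_right: "bilinear_map s R"
    and hom_L_dendriform_bilinear_left: "bilinear_map s L"
    and hom_L_dendriform_right_right: "R (\<alpha> x) (R y z) =
        R (R x y) (\<alpha> z) + R (L x y) (\<alpha> z) + R (\<alpha> y) (R x z)
        - R (L y x) (\<alpha> z) - R (R y x) (\<alpha> z)"
    and hom_L_dendriform_right_left: "R (\<alpha> x) (L y z) =
        L (R x y) (\<alpha> z) + L (\<alpha> y) (R x z) + L (\<alpha> y) (L x z) - L (L y x) (\<alpha> z)"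
  using assms unfolding hom_L_dendriform_def by blast+

lemma hom_L_dendriform_sum_associator_symmetric:
  assumes "hom_L_dendriform s R L \<alpha>"
  shows "hom_associator (\<lambda>x y. R x y + L x y) \<alpha> x y z =
         hom_associator (\<lambda>x y. R x y + L x y) \<alpha> y x z"
  using hom_L_dendriform_bilinear_right[OF assms] hom_L_dendriform_bilinear_left[OF assms]
  \<comment> \<open>the first axiom is used only at \<open>x y z\<close>: its right-hand side contains the instance at
    \<open>y x z\<close>, so as a general rewrite rule it would loop\<close>
  by (simp add: hom_associator_def hom_L_dendriform_right_right[OF assms, of x y z]
      hom_L_dendriform_right_left[OF assms] bilinear_map_add_left bilinear_map_add_right
      algebra_simps)

lemma hom_L_dendriform_antisym_associator_symmetric:
  assumes "hom_L_dendriform s R L \<alpha>"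
  shows "hom_associator (\<lambda>x y. R x y - L y x) \<alpha> x y z =
         hom_associator (\<lambda>x y. R x y - L y x) \<alpha> y x z"
  using hom_L_dendriform_bilinear_right[OF assms] hom_L_dendriform_bilinear_left[OF assms]
  by (simp add: hom_associator_def hom_L_dendriform_right_right[OF assms, of x y z]
      hom_L_dendriform_right_left[OF assms] bilinear_map_diff_left bilinear_map_diff_right
      algebra_simps)

theorem mainTheorem11:
  fixes scale :: "'k::field \<Rightarrow> 'a::ab_group_add \<Rightarrow> 'a"
    and R L :: "'a \<Rightarrow> 'a \<Rightarrow> 'a" and \<alpha> :: "'a \<Rightarrow> 'a"
  assumes "hom_L_dendriform scale R L \<alpha>"
  shows "hom_preLie scale (\<lambda>x y. R x y + L x y) \<alpha> \<and>
         hom_preLie scale (\<lambda>x y. R x y - L y x) \<alpha>"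
proof
  note vector_space = hom_L_dendriform_vector_space[OF assms]
    and linear = hom_L_dendriform_linear[OF assms]
    and R = hom_L_dendriform_bilinear_right[OF assms]
    and L = hom_L_dendriform_bilinear_left[OF assms]
  show "hom_preLie scale (\<lambda>x y. R x y + L x y) \<alpha>"
    using vector_space bilinear_map_add[OF R L] linear
      hom_L_dendriform_sum_associator_symmetric[OF assms]
    by (rule hom_preLieI)
  show "hom_preLie scale (\<lambda>x y. R x y - L y x) \<alpha>"
    using vector_space bilinear_map_diff[OF R bilinear_map_swap[OF L]] linear
      hom_L_dendriform_antisym_associator_symmetric[OF assms]
    by (rule hom_preLieI)
qed

end
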